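(* Let $d\ge 2$, $r\ge1$, $m\ge 1$ be integers and suppose there exist positive integers $n_1,\dots,n_d$ and a nonzero polynomial of degree $m$ in $\mathbb{C}[x_{i_1,\dots,i_d}\mid i_j\in[n_j]]$ vanishing on all tensors in $\mathbb{C}^{n_1}\otimes\cdots\otimes\mathbb{C}^{n_d}$ of partition rank at most $r$. Then there exists a nonzero polynomial $f\in\mathbb{Z}[x_{i_1,\dots,i_d}\mid i_1,\dots,i_d\in[m]]$ whose coefficients have greatest common divisor $1$, which has weight $(1^m,\dots,1^m)$, and which vanishes on all tensors in $\mathbb{C}^m\otimes\cdots\otimes\mathbb{C}^m$ ($d$ factors) of partition rank at most $r$. *)

theory Defs
  imports Complex_Main "HOL-Library.Poly_Mapping"
begin

(* Index tuples (i_1,...,i_d) are lists of length d, 0-based: i!j < n j.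
   A tensor in C^{n_1} (x) ... (x) C^{n_d} is a function nat list => complex
   (only entries at valid index tuples matter). *)
definition valid_idx :: "nat \<Rightarrow> (nat \<Rightarrow> nat) \<Rightarrow> nat list \<Rightarrow> bool" where
  "valid_idx d n i \<longleftrightarrow> length i = d \<and> (\<forall>j<d. i ! j < n j)"

type_synonym 'a mpoly = "(nat list \<Rightarrow>\<^sub>0 nat) \<Rightarrow>\<^sub>0 'a"

definition poly_vars :: "('a::zero) mpoly \<Rightarrow> nat list set" where
  "poly_vars p = (\<Union>\<mu>\<in>Poly_Mapping.keys p. Poly_Mapping.keys (\<mu> :: nat list \<Rightarrow>\<^sub>0 nat))"

definition mon_degree :: "(nat list \<Rightarrow>\<^sub>0 nat) \<Rightarrow> nat" where
  "mon_degree \<mu> = (\<Sum>v\<in>Poly_Mapping.keys \<mu>. Poly_Mapping.lookup \<mu> v)"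

definition mpoly_degree :: "('a::zero) mpoly \<Rightarrow> nat" where
  "mpoly_degree p = (if p = 0 then 0 else Max (mon_degree ` Poly_Mapping.keys p))"

definition mpoly_eval :: "('a::comm_semiring_1) mpoly \<Rightarrow> (nat list \<Rightarrow> 'a) \<Rightarrow> 'a" where
  "mpoly_eval p x = (\<Sum>\<mu>\<in>Poly_Mapping.keys p. Poly_Mapping.lookup p \<mu> * (\<Prod>v\<in>Poly_Mapping.keys \<mu>. x v ^ Poly_Mapping.lookup \<mu> v))"

definition depends_only :: "nat \<Rightarrow> nat set \<Rightarrow> (nat list \<Rightarrow> complex) \<Rightarrow> bool" where
  "depends_only d S f \<longleftrightarrow>
     (\<forall>i i'. length i = d \<longrightarrow> length i' = d \<longrightarrow> (\<forall>j\<in>S. i ! j = i' ! j) \<longrightarrow> f i = f i')"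

definition prank_le :: "nat \<Rightarrow> (nat \<Rightarrow> nat) \<Rightarrow> nat \<Rightarrow> (nat list \<Rightarrow> complex) \<Rightarrow> bool" where
  "prank_le d n r T \<longleftrightarrow>
     (\<exists>S a b. (\<forall>k<r. S k \<noteq> {} \<and> S k \<subset> {..<d} \<and>
                       depends_only d (S k) (a k) \<and> depends_only d ({..<d} - S k) (b k)) \<and>
              (\<forall>i. valid_idx d n i \<longrightarrow> T i = (\<Sum>k<r. a k i * b k i)))"

(* weight (1^m,...,1^m) under the torus product of d copies of the m-torus: in every monomial,
   for each tensor direction k and each index a, the total exponent of the
   variables x_i with i_k = a equals 1 *)
definition has_weight_ones :: "nat \<Rightarrow> nat \<Rightarrow> ('a::zero) mpoly \<Rightarrow> bool" where
  "has_weight_ones d m p \<longleftrightarrow>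
     (\<forall>\<mu>\<in>Poly_Mapping.keys p. \<forall>k<d. \<forall>a<m. (\<Sum>v\<in>{v\<in>Poly_Mapping.keys \<mu>. v ! k = a}. Poly_Mapping.lookup \<mu> v) = 1)"

end

theory Submission
  imports Defs "HOL-Computational_Algebra.Polynomial" "HOL-Library.FuncSet"
begin

(* Fix a monomial mu0 of P of top degree m and number its m variable occurrences by [m]; the j-th
   indices of these occurrences define maps phi_j : [m] -> [n_j].  Pushing a tensor T on [m]^d
   forward along phi_1 (x) ... (x) phi_d, after killing the basis vectors indexed by subsets
   A_j of [m], does not increase partition rank, so  sum_A (-1)^|A| P(push_A T)  vanishes on tensors
   of partition rank at most r.  Expanding by inclusion-exclusion, this is a polynomial in T whose
   monomials come from lifts of the occurrences of a monomial of P whose j-th indices exhaust [m]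
   for every j; since deg P = m these monomials have weight (1^m,...,1^m), and the diagonal lift of
   mu0 yields a monomial that no other lift produces, so the polynomial is nonzero.  A Q-linear
   functional C -> Q then makes the coefficients rational (vanishing survives because tensors of
   partition rank at most r are a polynomially parametrised family in which rational parameters
   are Zariski dense), and clearing denominators and the content gives a primitive integer
   polynomial. *)

section \<open>Polynomial functions and rational points\<close>

definition polyfun :: "(complex \<Rightarrow> complex) \<Rightarrow> bool" where
  "polyfun g \<longleftrightarrow> (\<exists>q. \<forall>z. g z = poly q z)"

lemma polyfun_const [intro]: "polyfun (\<lambda>z. c)"
  unfolding polyfun_def by (rule exI[of _ "[:c:]"]) simp

lemma polyfun_id [intro]: "polyfun (\<lambda>z. z)"
  unfolding polyfun_def by (rule exI[of _ "[:0, 1:]"]) simp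

lemma polyfun_add [intro]: "polyfun f \<Longrightarrow> polyfun g \<Longrightarrow> polyfun (\<lambda>z. f z + g z)"
  unfolding polyfun_def by (metis poly_add)

lemma polyfun_mult [intro]: "polyfun f \<Longrightarrow> polyfun g \<Longrightarrow> polyfun (\<lambda>z. f z * g z)"
  unfolding polyfun_def by (metis poly_mult)

lemma polyfun_power [intro]: "polyfun f \<Longrightarrow> polyfun (\<lambda>z. f z ^ k)"
  by (induction k) auto

lemma polyfun_sum [intro]: "(\<And>i. i \<in> A \<Longrightarrow> polyfun (f i)) \<Longrightarrow> polyfun (\<lambda>z. \<Sum>i\<in>A. f i z)"
  by (induction A rule: infinite_finite_induct) auto

lemma polyfun_prod [intro]: "(\<And>i. i \<in> A \<Longrightarrow> polyfun (f i)) \<Longrightarrow> polyfun (\<lambda>z. \<Prod>i\<in>A. f i z)"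
  by (induction A rule: infinite_finite_induct) auto

lemma polyfun_if [intro]: "polyfun f \<Longrightarrow> polyfun g \<Longrightarrow> polyfun (\<lambda>z. if b then f z else g z)"
  by (cases b) auto

lemma polyfun_eq_0_if_zero_on_Rats:
  assumes "polyfun f" and "\<And>z. z \<in> \<rat> \<Longrightarrow> f z = 0"
  shows "f w = 0"
proof -
  obtain q where q: "\<And>z. f z = poly q z"
    using assms(1) unfolding polyfun_def by blast
  have "q = 0"
  proof (rule ccontr)
    assume "q \<noteq> 0"
    then have "finite {x. poly q x = 0}" by (rule poly_roots_finite)
    moreover have "\<rat> \<subseteq> {x. poly q x = 0}" using assms(2) q by auto
    ultimately show False using Rats_infinite finite_subset by blast
  qed
  then show ?thesis using q by simp
qed

lemma zero_if_zero_at_rational_points: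
  fixes F :: "('x \<Rightarrow> complex) \<Rightarrow> complex"
  assumes "finite K"
    and "\<And>p. (\<forall>x\<in>K. p x \<in> \<rat>) \<Longrightarrow> F p = 0"
    and "\<And>p p'. (\<forall>x\<in>K. p x = p' x) \<Longrightarrow> F p = F p'"
    and "\<And>p x. polyfun (\<lambda>z. F (p(x := z)))"
  shows "F p = 0"
  using assms
proof (induction K arbitrary: F p rule: finite_induct)
  case empty
  then show ?case by blast
next
  case (insert x0 K)
  have "F (p(x0 := z)) = 0" if z: "z \<in> \<rat>" for z p
  proof -
    let ?G = "\<lambda>p. F (p(x0 := z))"
    have rational: "?G p = 0" if "\<forall>x\<in>K. p x \<in> \<rat>" for p
      using insert.prems(1) that z by simp
    have local: "?G p = ?G p'" if "\<forall>x\<in>K. p x = p' x" for p p'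
      using insert.prems(2)[of "p(x0 := z)" "p'(x0 := z)"] that by (simp add: fun_upd_def)
    have polynomial: "polyfun (\<lambda>w. ?G (p(x := w)))" for p x
    proof (cases "x = x0")
      case False
      have "polyfun (\<lambda>w. F (p(x0 := z, x := w)))" by (rule insert.prems(3))
      then show ?thesis using False by (simp add: fun_upd_twist)
    qed (simp add: polyfun_const)
    show ?thesis by (rule insert.IH[of ?G, OF rational local polynomial])
  qed
  then have "F (p(x0 := p x0)) = 0"
    using polyfun_eq_0_if_zero_on_Rats[OF insert.prems(3)] by blast
  then show ?case by simp
qed

definition monom_eval :: "(nat list \<Rightarrow>\<^sub>0 nat) \<Rightarrow> (nat list \<Rightarrow> 'a::comm_semiring_1) \<Rightarrow> 'a" where
  "monom_eval \<mu> x = (\<Prod>v\<in>Poly_Mapping.keys \<mu>. x v ^ Poly_Mapping.lookup \<mu> v)"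

lemma monom_eval_Rats:
  "(\<And>v. v \<in> Poly_Mapping.keys \<mu> \<Longrightarrow> x v \<in> \<rat>) \<Longrightarrow> monom_eval \<mu> x \<in> \<rat>"
  unfolding monom_eval_def by (intro Rats_prod Rats_power) auto

lemma mpoly_eval_eq_sum_superset:
  assumes "finite M" and "Poly_Mapping.keys p \<subseteq> M"
  shows "mpoly_eval p x = (\<Sum>\<mu>\<in>M. Poly_Mapping.lookup p \<mu> * monom_eval \<mu> x)"
  unfolding mpoly_eval_def monom_eval_def
  by (rule sum.mono_neutral_left[OF assms]) (simp add: in_keys_iff)

lemma mpoly_eval_cong:
  "(\<And>v. v \<in> poly_vars p \<Longrightarrow> x v = y v) \<Longrightarrow> mpoly_eval p x = mpoly_eval p y"
  unfolding mpoly_eval_def poly_vars_def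
  by (intro sum.cong refl arg_cong2[where f = "(*)"] prod.cong arg_cong2[where f = "(^)"]) auto

lemma mpoly_eval_add: "mpoly_eval (p + q) x = mpoly_eval p x + mpoly_eval q x"
proof -
  let ?M = "Poly_Mapping.keys p \<union> Poly_Mapping.keys q"
  have "mpoly_eval (p + q) x = (\<Sum>\<mu>\<in>?M. Poly_Mapping.lookup (p + q) \<mu> * monom_eval \<mu> x)"
    by (intro mpoly_eval_eq_sum_superset) (simp_all add: keys_add)
  also have "\<dots> = (\<Sum>\<mu>\<in>?M. Poly_Mapping.lookup p \<mu> * monom_eval \<mu> x)
                 + (\<Sum>\<mu>\<in>?M. Poly_Mapping.lookup q \<mu> * monom_eval \<mu> x)"
    by (simp add: lookup_add distrib_right sum.distrib)
  also have "\<dots> = mpoly_eval p x + mpoly_eval q x"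
    using mpoly_eval_eq_sum_superset[of ?M p x] mpoly_eval_eq_sum_superset[of ?M q x] by simp
  finally show ?thesis .
qed

lemma mpoly_eval_zero [simp]: "mpoly_eval 0 x = 0"
  unfolding mpoly_eval_def by simp

lemma mpoly_eval_sum: "mpoly_eval (\<Sum>a\<in>A. p a) x = (\<Sum>a\<in>A. mpoly_eval (p a) x)"
  by (induction A rule: infinite_finite_induct) (simp_all add: mpoly_eval_add)

lemma mpoly_eval_single: "mpoly_eval (Poly_Mapping.single \<mu> c) x = c * monom_eval \<mu> x"
  unfolding mpoly_eval_def monom_eval_def by (cases "c = 0") simp_all

lemma mpoly_eval_map_superset:
  assumes "finite M" and "Poly_Mapping.keys p \<subseteq> M" and "g 0 = 0"
  shows "mpoly_eval (Poly_Mapping.map g p) x = (\<Sum>\<mu>\<in>M. g (Poly_Mapping.lookup p \<mu>) * monom_eval \<mu> x)"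
proof -
  have "Poly_Mapping.keys (Poly_Mapping.map g p) \<subseteq> Poly_Mapping.keys p"
    by (auto simp: in_keys_iff map.rep_eq when_def)
  then have "mpoly_eval (Poly_Mapping.map g p) x
      = (\<Sum>\<mu>\<in>M. Poly_Mapping.lookup (Poly_Mapping.map g p) \<mu> * monom_eval \<mu> x)"
    using assms(1,2) by (intro mpoly_eval_eq_sum_superset) auto
  also have "\<dots> = (\<Sum>\<mu>\<in>M. g (Poly_Mapping.lookup p \<mu>) * monom_eval \<mu> x)"
    using assms(3) by (intro sum.cong) (auto simp: map.rep_eq when_def)
  finally show ?thesis .
qed

lemma poly_vars_mono:
  "Poly_Mapping.keys p \<subseteq> Poly_Mapping.keys q \<Longrightarrow> poly_vars p \<subseteq> poly_vars q"
  unfolding poly_vars_def by blast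

lemma has_weight_ones_mono:
  "Poly_Mapping.keys p \<subseteq> Poly_Mapping.keys q \<Longrightarrow> has_weight_ones d m q \<Longrightarrow> has_weight_ones d m p"
  unfolding has_weight_ones_def by blast

definition occs :: "(nat list \<Rightarrow>\<^sub>0 nat) \<Rightarrow> (nat list \<times> nat) set" where
  "occs \<mu> = Sigma (Poly_Mapping.keys \<mu>) (\<lambda>v. {..<Poly_Mapping.lookup \<mu> v})"

lemma finite_occs [simp]: "finite (occs \<mu>)"
  unfolding occs_def by simp

lemma card_occs: "card (occs \<mu>) = mon_degree \<mu>"
  unfolding occs_def mon_degree_def by simp

lemma lookup_eq_card_occs: "Poly_Mapping.lookup \<mu> v = card {e\<in>occs \<mu>. fst e = v}"
proof -
  have "{e\<in>occs \<mu>. fst e = v} = Pair v ` {..<Poly_Mapping.lookup \<mu> v}"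
    unfolding occs_def by (auto simp: in_keys_iff)
  then show ?thesis by (simp add: card_image inj_on_def)
qed

lemma monom_eval_occs: "monom_eval \<mu> x = (\<Prod>e\<in>occs \<mu>. x (fst e))"
proof -
  have "(\<Prod>e\<in>occs \<mu>. x (fst e)) = (\<Prod>v\<in>Poly_Mapping.keys \<mu>. \<Prod>i<Poly_Mapping.lookup \<mu> v. x v)"
    unfolding occs_def by (subst prod.Sigma) (auto simp: case_prod_beta)
  then show ?thesis unfolding monom_eval_def by simp
qed

definition squarefree_monom :: "'a set \<Rightarrow> ('a \<Rightarrow>\<^sub>0 nat)" where
  "squarefree_monom U = Abs_poly_mapping (\<lambda>u. if u \<in> U then 1 else 0)"

lemma lookup_squarefree_monom:
  "finite U \<Longrightarrow> Poly_Mapping.lookup (squarefree_monom U) = (\<lambda>u. if u \<in> U then 1 else 0)"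
  unfolding squarefree_monom_def by (simp add: lookup_Abs_poly_mapping)

lemma keys_squarefree_monom: "finite U \<Longrightarrow> Poly_Mapping.keys (squarefree_monom U) = U"
  by (simp add: in_keys_iff lookup_squarefree_monom set_eq_iff)

lemma monom_eval_squarefree_monom:
  "finite U \<Longrightarrow> monom_eval (squarefree_monom U) x = (\<Prod>u\<in>U. x u)"
  unfolding monom_eval_def by (simp add: keys_squarefree_monom lookup_squarefree_monom)

definition box :: "nat \<Rightarrow> (nat \<Rightarrow> 'a set) \<Rightarrow> 'a list set" where
  "box d R = {u. length u = d \<and> (\<forall>j<d. u ! j \<in> R j)}"

lemma finite_box: "(\<And>j. j < d \<Longrightarrow> finite (R j)) \<Longrightarrow> finite (box d R)"
proof -
  assume "\<And>j. j < d \<Longrightarrow> finite (R j)"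
  then have "finite {xs. set xs \<subseteq> (\<Union>j<d. R j) \<and> length xs = d}"
    by (intro finite_lists_length_eq) auto
  moreover have "box d R \<subseteq> {xs. set xs \<subseteq> (\<Union>j<d. R j) \<and> length xs = d}"
    by (fastforce simp: box_def in_set_conv_nth)
  ultimately show ?thesis by (rule finite_subset[rotated])
qed

lemma nth_mem_box: "u \<in> box d R \<Longrightarrow> j < d \<Longrightarrow> u ! j \<in> R j"
  unfolding box_def by blast

lemma box_cong: "(\<And>j. j < d \<Longrightarrow> R j = R' j) \<Longrightarrow> box d R = box d R'"
  unfolding box_def by auto

lemma finite_valid_idx: "finite {i. valid_idx d n i}"
  by (rule finite_subset[OF _ finite_box[of d "\<lambda>j. {..<n j}"]]) (auto simp: box_def valid_idx_def)

definition proj_idx :: "nat \<Rightarrow> nat set \<Rightarrow> nat list \<Rightarrow> nat list" where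
  "proj_idx d S i = map (\<lambda>j. if j \<in> S then i ! j else 0) [0..<d]"

lemma length_proj_idx [simp]: "length (proj_idx d S i) = d"
  unfolding proj_idx_def by simp

lemma nth_proj_idx [simp]: "j < d \<Longrightarrow> proj_idx d S i ! j = (if j \<in> S then i ! j else 0)"
  unfolding proj_idx_def by simp

lemma valid_idx_proj_idx:
  "(\<forall>j<d. 0 < n j) \<Longrightarrow> valid_idx d n i \<Longrightarrow> valid_idx d n (proj_idx d S i)"
  unfolding valid_idx_def by simp

lemma depends_only_proj_idx:
  assumes "depends_only d S f" and "S \<subseteq> {..<d}" and "length i = d"
  shows "f (proj_idx d S i) = f i"
proof -
  have "\<forall>j\<in>S. proj_idx d S i ! j = i ! j" using assms(2) by auto
  then show ?thesis using assms(1,3) unfolding depends_only_def by (metis length_proj_idx)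
qed

lemma depends_only_comp_proj_idx: "depends_only d S (\<lambda>i. g (proj_idx d S i))"
  unfolding depends_only_def by (auto intro!: arg_cong[where f = g] nth_equalityI)

text \<open>\<open>p (True, k, -)\<close> and \<open>p (False, k, -)\<close> are the two factors of the \<open>k\<close>-th summand, so that
  the tensors of partition rank at most \<open>r\<close> form one family parametrised by \<open>p\<close>.\<close>

definition prank_param ::
    "nat \<Rightarrow> nat \<Rightarrow> (nat \<Rightarrow> nat set) \<Rightarrow> (bool \<times> nat \<times> nat list \<Rightarrow> complex) \<Rightarrow> nat list \<Rightarrow> complex" where
  "prank_param d r S p i =
     (\<Sum>k<r. p (True, k, proj_idx d (S k) i) * p (False, k, proj_idx d ({..<d} - S k) i))"

lemma prank_le_prank_param:
  assumes "\<And>k. k < r \<Longrightarrow> S k \<noteq> {} \<and> S k \<subset> {..<d}"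
  shows "prank_le d n r (prank_param d r S p)"
  unfolding prank_le_def prank_param_def
proof (rule exI[of _ S], rule exI[of _ "\<lambda>k i. p (True, k, proj_idx d (S k) i)"],
    rule exI[of _ "\<lambda>k i. p (False, k, proj_idx d ({..<d} - S k) i)"])
qed (use assms in \<open>auto intro: depends_only_comp_proj_idx\<close>)

lemma prank_le_imp_prank_param:
  assumes "prank_le d n r T"
  obtains S p where "\<And>k. k < r \<Longrightarrow> S k \<noteq> {} \<and> S k \<subset> {..<d}"
    and "\<And>i. valid_idx d n i \<Longrightarrow> T i = prank_param d r S p i"
proof -
  obtain S a b where
    S: "\<And>k. k < r \<Longrightarrow> S k \<noteq> {} \<and> S k \<subset> {..<d} \<and>
            depends_only d (S k) (a k) \<and> depends_only d ({..<d} - S k) (b k)"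
    and T: "\<And>i. valid_idx d n i \<Longrightarrow> T i = (\<Sum>k<r. a k i * b k i)"
    using assms unfolding prank_le_def by blast
  define p where "p = (\<lambda>(\<beta>::bool, k, w). if \<beta> then a k w else b k w)"
  have Tp: "T i = prank_param d r S p i" if "valid_idx d n i" for i
  proof -
    have "length i = d" using that unfolding valid_idx_def by simp
    then have ab: "a k (proj_idx d (S k) i) = a k i" "b k (proj_idx d ({..<d} - S k) i) = b k i"
      if "k < r" for k
      using S[OF that] by (blast intro: depends_only_proj_idx)+
    show ?thesis
      unfolding T[OF that] prank_param_def p_def by (intro sum.cong refl) (simp add: ab)
  qed
  show ?thesis
  proof (rule that[of S p])
    show "S k \<noteq> {} \<and> S k \<subset> {..<d}" if "k < r" for k using S[OF that] by blast
  qed (rule Tp)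
qed

lemma mpoly_eval_eq_0_on_prank_le_if_rational:
  fixes Q :: "complex mpoly"
  assumes n: "\<forall>j<d. 0 < n j" and vars: "poly_vars Q \<subseteq> {i. valid_idx d n i}"
    and rational: "\<And>T. prank_le d n r T \<Longrightarrow> (\<forall>i. valid_idx d n i \<longrightarrow> T i \<in> \<rat>) \<Longrightarrow> mpoly_eval Q T = 0"
    and T: "prank_le d n r T"
  shows "mpoly_eval Q T = 0"
proof -
  obtain S p where S: "\<And>k. k < r \<Longrightarrow> S k \<noteq> {} \<and> S k \<subset> {..<d}"
    and Tp: "\<And>i. valid_idx d n i \<Longrightarrow> T i = prank_param d r S p i"
    using prank_le_imp_prank_param[OF T] by blast
  define K where "K = (UNIV :: bool set) \<times> {..<r} \<times> {i. valid_idx d n i}"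
  define F where "F p = mpoly_eval Q (prank_param d r S p)" for p
  have proj_K: "(\<beta>, k, proj_idx d U i) \<in> K" if "valid_idx d n i" and "k < r" for \<beta> k U i
    unfolding K_def using valid_idx_proj_idx[OF n that(1)] that(2) by simp
  have "F p = 0"
  proof (rule zero_if_zero_at_rational_points[of K F])
    show "finite K"
      unfolding K_def using finite_valid_idx by simp
    show "F p = 0" if "\<forall>x\<in>K. p x \<in> \<rat>" for p
      unfolding F_def using S that proj_K
      by (intro rational prank_le_prank_param) (auto simp: prank_param_def intro!: Rats_sum Rats_mult)
    show "F p = F p'" if "\<forall>x\<in>K. p x = p' x" for p p'
      unfolding F_def using vars that proj_K
      by (intro mpoly_eval_cong) (auto simp: prank_param_def intro!: sum.cong)
    show "polyfun (\<lambda>z. F (p(x := z)))" for p x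
      unfolding F_def mpoly_eval_def monom_eval_def prank_param_def fun_upd_apply
      by (intro polyfun_sum polyfun_mult polyfun_power polyfun_prod polyfun_if polyfun_const polyfun_id)
  qed
  moreover have "F p = mpoly_eval Q T"
    unfolding F_def using vars Tp by (intro mpoly_eval_cong) auto
  ultimately show ?thesis by simp
qed

section \<open>Rational coefficients\<close>

lemma exists_rat_linear_functional:
  fixes c :: complex
  assumes "c \<noteq> 0"
  obtains L :: "complex \<Rightarrow> rat" where "L c = 1"
    and "\<And>x y. L (x + y) = L x + L y" and "\<And>q x. L (of_rat q * x) = q * L x"
proof -
  interpret V: vector_space_pair "\<lambda>(q::rat) (z::complex). of_rat q * z" "(*) :: rat \<Rightarrow> rat \<Rightarrow> rat"
    by unfold_locales (auto simp: algebra_simps of_rat_add of_rat_mult)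
  have independent: "V.vs1.independent {c}"
    using assms by (intro V.vs1.independent_insertI) (simp_all add: V.vs1.span_empty V.vs1.independent_empty)
  interpret L: Vector_Spaces.linear "\<lambda>(q::rat) (z::complex). of_rat q * z" "(*) :: rat \<Rightarrow> rat \<Rightarrow> rat"
      "V.construct {c} (\<lambda>_. 1)"
    by (rule V.linear_construct[OF independent])
  show ?thesis
    by (rule that[of "V.construct {c} (\<lambda>_. 1)"])
      (simp_all add: V.construct_basis[OF independent] L.add L.scale)
qed

lemma mpoly_eval_map_rat_functional:
  fixes Q :: "complex mpoly" and L :: "complex \<Rightarrow> rat"
  assumes L_add: "\<And>x y. L (x + y) = L x + L y" and L_scale: "\<And>q x. L (of_rat q * x) = q * L x"
    and rational: "\<And>v. v \<in> poly_vars Q \<Longrightarrow> T v \<in> \<rat>"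
  shows "mpoly_eval (Poly_Mapping.map of_rat (Poly_Mapping.map L Q) :: complex mpoly) T
    = of_rat (L (mpoly_eval Q T))"
proof -
  have L_0: "L 0 = 0"
    using L_add[of 0 0] by simp
  have L_sum: "L (\<Sum>a\<in>A. g a) = (\<Sum>a\<in>A. L (g a))" for A and g :: "'a \<Rightarrow> complex"
    by (induction A rule: infinite_finite_induct) (simp_all add: L_0 L_add)
  have L_scale': "L (x * of_rat q) = q * L x" for x q
    by (metis L_scale mult.commute)
  have "monom_eval \<nu> T \<in> \<rat>" if "\<nu> \<in> Poly_Mapping.keys Q" for \<nu>
    using that rational by (intro monom_eval_Rats) (auto simp: poly_vars_def)
  then have "\<forall>\<nu>\<in>Poly_Mapping.keys Q. \<exists>x. monom_eval \<nu> T = of_rat x"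
    by (auto elim!: Rats_cases)
  then obtain w where w: "\<And>\<nu>. \<nu> \<in> Poly_Mapping.keys Q \<Longrightarrow> monom_eval \<nu> T = of_rat (w \<nu>)"
    by metis
  have "Poly_Mapping.keys (Poly_Mapping.map L Q) \<subseteq> Poly_Mapping.keys Q"
    by (auto simp: in_keys_iff map.rep_eq)
  then have "mpoly_eval (Poly_Mapping.map of_rat (Poly_Mapping.map L Q)) T
      = (\<Sum>\<nu>\<in>Poly_Mapping.keys Q. of_rat (Poly_Mapping.lookup (Poly_Mapping.map L Q) \<nu>) * monom_eval \<nu> T)"
    by (intro mpoly_eval_map_superset) auto
  also have "\<dots> = of_rat (\<Sum>\<nu>\<in>Poly_Mapping.keys Q. L (Poly_Mapping.lookup Q \<nu> * of_rat (w \<nu>)))"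
    by (simp add: map.rep_eq in_keys_iff w L_scale' of_rat_sum of_rat_mult mult.commute)
  also have "\<dots> = of_rat (L (mpoly_eval Q T))"
    using mpoly_eval_eq_sum_superset[of "Poly_Mapping.keys Q" Q T] by (simp add: L_sum w)
  finally show ?thesis .
qed

lemma exists_rat_poly_vanishing_on_prank_le:
  fixes Q :: "complex mpoly"
  assumes n: "\<forall>j<d. 0 < n j" and "Q \<noteq> 0" and vars: "poly_vars Q \<subseteq> {i. valid_idx d n i}"
    and vanishing: "\<And>T. prank_le d n r T \<Longrightarrow> mpoly_eval Q T = 0"
  obtains q :: "rat mpoly" where "q \<noteq> 0" and "Poly_Mapping.keys q \<subseteq> Poly_Mapping.keys Q"
    and "\<And>T. prank_le d n r T \<Longrightarrow> mpoly_eval (Poly_Mapping.map of_rat q :: complex mpoly) T = 0"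
proof -
  obtain \<nu>0 where "\<nu>0 \<in> Poly_Mapping.keys Q"
    using \<open>Q \<noteq> 0\<close> by fastforce
  then obtain L where L1: "L (Poly_Mapping.lookup Q \<nu>0) = 1"
    and L_add: "\<And>x y. L (x + y) = L x + L y" and L_scale: "\<And>q x. L (of_rat q * x) = q * L x"
    using exists_rat_linear_functional by (metis in_keys_iff)
  define q where "q = Poly_Mapping.map L Q"
  have keys_q: "Poly_Mapping.keys q \<subseteq> Poly_Mapping.keys Q"
    by (auto simp: q_def in_keys_iff map.rep_eq)
  have "Poly_Mapping.lookup q \<nu>0 = 1"
    using \<open>\<nu>0 \<in> _\<close> L1 by (simp add: q_def map.rep_eq in_keys_iff)
  then have "q \<noteq> 0"
    by auto
  moreover have "mpoly_eval (Poly_Mapping.map of_rat q :: complex mpoly) T = 0"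
    if "prank_le d n r T" and "\<forall>i. valid_idx d n i \<longrightarrow> T i \<in> \<rat>" for T
    using that vars vanishing L_add[of 0 0] mpoly_eval_map_rat_functional[of L Q T, OF L_add L_scale]
    unfolding q_def by (simp add: subset_iff)
  moreover have "poly_vars (Poly_Mapping.map of_rat q :: complex mpoly) \<subseteq> poly_vars Q"
    using keys_q by (intro poly_vars_mono) (auto simp: in_keys_iff map.rep_eq)
  ultimately show ?thesis
    using that keys_q vars mpoly_eval_eq_0_on_prank_le_if_rational[OF n] by (meson order_trans)
qed

lemma exists_int_multiple:
  fixes q :: "'k \<Rightarrow>\<^sub>0 rat"
  obtains D :: int and k :: "'k \<Rightarrow>\<^sub>0 int"
  where "D > 0" and "\<And>\<nu>. of_int (Poly_Mapping.lookup k \<nu>) = of_int D * Poly_Mapping.lookup q \<nu>"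
proof -
  define num where "num x = fst (quotient_of x)" for x :: rat
  define den where "den x = snd (quotient_of x)" for x :: rat
  have den_pos: "den x > 0" for x
    unfolding den_def by (simp add: quotient_of_denom_pos')
  have num_den: "x = of_int (num x) / of_int (den x)" for x
    unfolding num_def den_def by (simp add: quotient_of_div)
  define D where "D = (\<Prod>x\<in>Poly_Mapping.lookup q ` Poly_Mapping.keys q. den x)"
  have "D > 0"
    unfolding D_def using den_pos by (simp add: prod_pos)
  define k where "k = Poly_Mapping.map (\<lambda>x. num x * (D div den x)) q"
  have "of_int (Poly_Mapping.lookup k \<nu>) = of_int D * Poly_Mapping.lookup q \<nu>" for \<nu>
  proof (cases "\<nu> \<in> Poly_Mapping.keys q")
    case True
    let ?x = "Poly_Mapping.lookup q \<nu>"
    have "den ?x dvd D"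
      unfolding D_def using True by (intro dvd_prodI) auto
    then obtain e where "D = den ?x * e" by blast
    then show ?thesis
      using True den_pos[of ?x] num_den[of ?x]
      by (simp add: k_def map.rep_eq in_keys_iff field_simps)
  qed (simp add: k_def map.rep_eq in_keys_iff)
  with \<open>D > 0\<close> show ?thesis by (rule that)
qed

lemma exists_primitive_part:
  fixes k :: "'k \<Rightarrow>\<^sub>0 int"
  assumes "k \<noteq> 0"
  obtains G :: int and f :: "'k \<Rightarrow>\<^sub>0 int"
  where "G > 0" and "\<And>\<nu>. Poly_Mapping.lookup k \<nu> = G * Poly_Mapping.lookup f \<nu>"
    and "Gcd (Poly_Mapping.lookup f ` Poly_Mapping.keys f) = 1"
proof -
  define G where "G = Gcd (Poly_Mapping.lookup k ` Poly_Mapping.keys k)"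
  obtain \<nu> where "Poly_Mapping.lookup k \<nu> \<noteq> 0"
    using assms by (metis lookup_zero poly_mapping_eqI)
  then have "G \<noteq> 0"
    unfolding G_def by (metis Gcd_0_iff image_eqI in_keys_iff singletonD subsetD)
  then have "G > 0"
    unfolding G_def by (metis Gcd_int_greater_eq_0 less_le)
  define f where "f = Poly_Mapping.map (\<lambda>a. a div G) k"
  have k_eq: "Poly_Mapping.lookup k \<nu> = G * Poly_Mapping.lookup f \<nu>" for \<nu>
  proof (cases "\<nu> \<in> Poly_Mapping.keys k")
    case True
    then have "G dvd Poly_Mapping.lookup k \<nu>"
      unfolding G_def by (simp add: Gcd_dvd)
    then show ?thesis by (simp add: f_def map.rep_eq when_def)
  qed (simp add: f_def map.rep_eq in_keys_iff)
  have "Poly_Mapping.keys f = Poly_Mapping.keys k"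
    using \<open>G \<noteq> 0\<close> by (auto simp: in_keys_iff k_eq)
  then have "Poly_Mapping.lookup k ` Poly_Mapping.keys k = (*) G ` Poly_Mapping.lookup f ` Poly_Mapping.keys f"
    by (simp add: k_eq image_image)
  then have "G = Gcd ((*) G ` Poly_Mapping.lookup f ` Poly_Mapping.keys f)"
    unfolding G_def by simp
  also have "\<dots> = G * Gcd (Poly_Mapping.lookup f ` Poly_Mapping.keys f)"
    using \<open>G > 0\<close> by (simp add: Gcd_mult abs_mult normalize_int_def)
  finally have "Gcd (Poly_Mapping.lookup f ` Poly_Mapping.keys f) = 1"
    using \<open>G \<noteq> 0\<close> by simp
  with \<open>G > 0\<close> k_eq show ?thesis by (rule that)
qed

lemma exists_primitive_int_multiple:
  fixes q :: "'k \<Rightarrow>\<^sub>0 rat"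
  assumes "q \<noteq> 0"
  obtains f :: "'k \<Rightarrow>\<^sub>0 int" and c :: rat
  where "c \<noteq> 0" and "\<And>\<nu>. of_int (Poly_Mapping.lookup f \<nu>) = c * Poly_Mapping.lookup q \<nu>"
    and "Gcd (Poly_Mapping.lookup f ` Poly_Mapping.keys f) = 1"
proof -
  obtain D k where "D > 0"
    and k: "\<And>\<nu>. of_int (Poly_Mapping.lookup k \<nu>) = of_int D * Poly_Mapping.lookup q \<nu>"
    using exists_int_multiple[of q] by metis
  have "k \<noteq> 0"
    using assms \<open>D > 0\<close> k by (metis lookup_zero mult_eq_0_iff of_int_0 of_int_0_less_iff
        poly_mapping_eqI less_irrefl)
  then obtain G f where "G > 0" and kf: "\<And>\<nu>. Poly_Mapping.lookup k \<nu> = G * Poly_Mapping.lookup f \<nu>"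
    and "Gcd (Poly_Mapping.lookup f ` Poly_Mapping.keys f) = 1"
    using exists_primitive_part by metis
  moreover have "of_int (Poly_Mapping.lookup f \<nu>) = of_int D / of_int G * Poly_Mapping.lookup q \<nu>" for \<nu>
    using k[of \<nu>] kf[of \<nu>] \<open>G > 0\<close> by (simp add: field_simps)
  moreover have "(of_int D / of_int G :: rat) \<noteq> 0"
    using \<open>D > 0\<close> \<open>G > 0\<close> by simp
  ultimately show ?thesis using that by blast
qed

lemma exists_primitive_int_poly_vanishing_on_prank_le:
  fixes Q :: "complex mpoly"
  assumes "\<forall>j<d. 0 < n j" and "Q \<noteq> 0" and "poly_vars Q \<subseteq> {i. valid_idx d n i}"
    and "\<And>T. prank_le d n r T \<Longrightarrow> mpoly_eval Q T = 0"
  obtains f :: "int mpoly" where "f \<noteq> 0" and "Poly_Mapping.keys f \<subseteq> Poly_Mapping.keys Q"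
    and "Gcd (Poly_Mapping.lookup f ` Poly_Mapping.keys f) = 1"
    and "\<And>T. prank_le d n r T \<Longrightarrow> mpoly_eval (Poly_Mapping.map of_int f :: complex mpoly) T = 0"
proof -
  obtain q where "q \<noteq> 0" and keys_q: "Poly_Mapping.keys q \<subseteq> Poly_Mapping.keys Q"
    and q_vanishing: "\<And>T. prank_le d n r T \<Longrightarrow> mpoly_eval (Poly_Mapping.map of_rat q :: complex mpoly) T = 0"
    using exists_rat_poly_vanishing_on_prank_le[OF assms] by blast
  obtain f c where "c \<noteq> 0" and fq: "\<And>\<nu>. of_int (Poly_Mapping.lookup f \<nu>) = c * Poly_Mapping.lookup q \<nu>"
    and "Gcd (Poly_Mapping.lookup f ` Poly_Mapping.keys f) = 1"
    using exists_primitive_int_multiple[OF \<open>q \<noteq> 0\<close>] by blast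
  have "Poly_Mapping.lookup f \<nu> = 0 \<longleftrightarrow> Poly_Mapping.lookup q \<nu> = 0" for \<nu>
    using fq[of \<nu>] \<open>c \<noteq> 0\<close> by (metis mult_eq_0_iff of_int_eq_0_iff)
  then have keys_f: "Poly_Mapping.keys f = Poly_Mapping.keys q"
    by (intro set_eqI) (simp add: in_keys_iff)
  have eval_f: "mpoly_eval (Poly_Mapping.map of_int f :: complex mpoly) T
      = of_rat c * mpoly_eval (Poly_Mapping.map of_rat q :: complex mpoly) T" for T
  proof -
    have "(of_int (Poly_Mapping.lookup f \<nu>) :: complex) = of_rat c * of_rat (Poly_Mapping.lookup q \<nu>)" for \<nu>
      by (metis fq of_rat_mult of_rat_of_int_eq)
    then show ?thesis
      by (simp add: mpoly_eval_map_superset[of "Poly_Mapping.keys q"] keys_f sum_distrib_left mult.assoc)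
  qed
  show ?thesis
  proof (rule that)
    show "f \<noteq> 0"
      using \<open>q \<noteq> 0\<close> keys_f by (metis keys_eq_empty)
    show "Poly_Mapping.keys f \<subseteq> Poly_Mapping.keys Q"
      using keys_f keys_q by simp
    show "mpoly_eval (Poly_Mapping.map of_int f :: complex mpoly) T = 0" if "prank_le d n r T" for T
      using q_vanishing[OF that] by (simp add: eval_f)
  qed fact
qed

section \<open>Restricted push-forwards of tensors\<close>

definition merge_idx :: "nat \<Rightarrow> nat set \<Rightarrow> nat list \<times> nat list \<Rightarrow> nat list" where
  "merge_idx d S p = map (\<lambda>j. if j \<in> S then fst p ! j else snd p ! j) [0..<d]"

lemma length_merge_idx [simp]: "length (merge_idx d S p) = d"
  unfolding merge_idx_def by simp

lemma nth_merge_idx [simp]: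
  "j < d \<Longrightarrow> merge_idx d S p ! j = (if j \<in> S then fst p ! j else snd p ! j)"
  unfolding merge_idx_def by simp

lemma bij_betw_merge_idx:
  "bij_betw (merge_idx d S)
     (box d (\<lambda>j. if j \<in> S then R j else {0}) \<times> box d (\<lambda>j. if j \<in> S then {0} else R j)) (box d R)"
  (is "bij_betw _ (?A \<times> ?B) _")
proof -
  have coords: "fst q ! j \<in> (if j \<in> S then R j else {0}) \<and> snd q ! j \<in> (if j \<in> S then {0} else R j)"
    if "q \<in> ?A \<times> ?B" and "j < d" for q j
    using nth_mem_box[of "fst q" d "\<lambda>j. if j \<in> S then R j else {0}" j]
      nth_mem_box[of "snd q" d "\<lambda>j. if j \<in> S then {0} else R j" j] that
    by (simp add: mem_Times_iff)
  have lengths: "length (fst q) = d" "length (snd q) = d" if "q \<in> ?A \<times> ?B" for q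
    using that by (auto simp: box_def)
  show ?thesis
  proof (rule bij_betw_imageI)
    show "inj_on (merge_idx d S) (?A \<times> ?B)"
    proof (rule inj_onI)
      fix p p' assume p: "p \<in> ?A \<times> ?B" and p': "p' \<in> ?A \<times> ?B"
        and eq: "merge_idx d S p = merge_idx d S p'"
      have "fst p ! j = fst p' ! j \<and> snd p ! j = snd p' ! j" if "j < d" for j
      proof -
        have "(if j \<in> S then fst p ! j else snd p ! j) = (if j \<in> S then fst p' ! j else snd p' ! j)"
          using arg_cong[OF eq, of "\<lambda>u. u ! j"] that by simp
        then show ?thesis
          using coords[OF p that] coords[OF p' that] by (cases "j \<in> S") auto
      qed
      with lengths[OF p] lengths[OF p'] show "p = p'"
        by (auto intro!: prod_eqI nth_equalityI)
    qed
    show "merge_idx d S ` (?A \<times> ?B) = box d R"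
    proof (intro equalityI subsetI)
      fix u assume "u \<in> merge_idx d S ` (?A \<times> ?B)"
      then obtain p where p: "p \<in> ?A \<times> ?B" and u: "u = merge_idx d S p" by blast
      have "u ! j \<in> R j" if "j < d" for j
        using coords[OF p that] u that by (cases "j \<in> S") auto
      then show "u \<in> box d R"
        using u by (simp add: box_def)
    next
      fix u assume u: "u \<in> box d R"
      then have "u = merge_idx d S (proj_idx d S u, proj_idx d (- S) u)"
        by (auto simp: box_def intro!: nth_equalityI)
      moreover have "(proj_idx d S u, proj_idx d (- S) u) \<in> ?A \<times> ?B"
        using u by (auto simp: box_def)
      ultimately show "u \<in> merge_idx d S ` (?A \<times> ?B)" by blast
    qed
  qed
qed

lemma sum_box_split:
  fixes \<alpha> \<beta> :: "nat list \<Rightarrow> complex"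
  assumes S: "S \<subseteq> {..<d}" and \<alpha>: "depends_only d S \<alpha>" and \<beta>: "depends_only d ({..<d} - S) \<beta>"
  shows "(\<Sum>u\<in>box d R. \<alpha> u * \<beta> u) =
    (\<Sum>u\<in>box d (\<lambda>j. if j \<in> S then R j else {0}). \<alpha> u) * (\<Sum>u\<in>box d (\<lambda>j. if j \<in> S then {0} else R j). \<beta> u)"
    (is "_ = sum _ ?A * sum _ ?B")
proof -
  have "\<alpha> (merge_idx d S p) = \<alpha> (fst p) \<and> \<beta> (merge_idx d S p) = \<beta> (snd p)" if p: "p \<in> ?A \<times> ?B" for p
  proof -
    have "length (merge_idx d S p) = d" "length (fst p) = d" "length (snd p) = d"
      using p by (auto simp: box_def)
    moreover have "\<forall>j\<in>S. merge_idx d S p ! j = fst p ! j"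
      and "\<forall>j\<in>{..<d} - S. merge_idx d S p ! j = snd p ! j"
      using S by auto
    ultimately show ?thesis
      using \<alpha> \<beta> unfolding depends_only_def by blast
  qed
  then have "(\<Sum>p\<in>?A \<times> ?B. \<alpha> (merge_idx d S p) * \<beta> (merge_idx d S p))
      = (\<Sum>p\<in>?A \<times> ?B. \<alpha> (fst p) * \<beta> (snd p))"
    by (intro sum.cong) auto
  then have "(\<Sum>u\<in>box d R. \<alpha> u * \<beta> u) = (\<Sum>p\<in>?A \<times> ?B. \<alpha> (fst p) * \<beta> (snd p))"
    using sum.reindex_bij_betw[OF bij_betw_merge_idx, of "\<lambda>u. \<alpha> u * \<beta> u" d S R] by simp
  also have "\<dots> = sum \<alpha> ?A * sum \<beta> ?B"
    by (simp add: sum_product sum.cartesian_product case_prod_beta)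
  finally show ?thesis .
qed

definition fibre :: "nat \<Rightarrow> nat \<Rightarrow> (nat \<Rightarrow> nat \<Rightarrow> nat) \<Rightarrow> nat list \<Rightarrow> nat list set" where
  "fibre d m \<phi> v = box d (\<lambda>j. {c. c < m \<and> \<phi> j c = v ! j})"

lemma finite_fibre [simp]: "finite (fibre d m \<phi> v)"
  unfolding fibre_def by (rule finite_box) simp

text \<open>The image of \<open>T\<close> under the tensor product of the linear maps \<open>\<complex>\<^sup>m \<rightarrow> \<complex>\<^sup>n\<^sub>j\<close> sending
  the basis vector \<open>e\<^sub>c\<close> to \<open>e\<^sub>\<phi>\<^sub>j\<^sub>c\<close> if \<open>c \<notin> A j\<close> and to \<open>0\<close> if \<open>c \<in> A j\<close>.\<close>

definition push_avoiding ::
    "nat \<Rightarrow> nat \<Rightarrow> (nat \<Rightarrow> nat \<Rightarrow> nat) \<Rightarrow> (nat \<Rightarrow> nat set) \<Rightarrow> (nat list \<Rightarrow> complex) \<Rightarrow> nat list \<Rightarrow> complex" where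
  "push_avoiding d m \<phi> A T v = (\<Sum>u\<in>fibre d m \<phi> v. if \<forall>j<d. u ! j \<notin> A j then T u else 0)"

lemma prank_le_push_avoiding:
  assumes "prank_le d (\<lambda>_. m) r T"
  shows "prank_le d n r (push_avoiding d m \<phi> A T)"
proof -
  obtain S a b where
    S: "\<And>k. k < r \<Longrightarrow> S k \<noteq> {} \<and> S k \<subset> {..<d} \<and>
            depends_only d (S k) (a k) \<and> depends_only d ({..<d} - S k) (b k)"
    and T: "\<And>i. valid_idx d (\<lambda>_. m) i \<Longrightarrow> T i = (\<Sum>k<r. a k i * b k i)"
    using assms unfolding prank_le_def by blast
  define R where "R v j = {c. c < m \<and> c \<notin> A j \<and> \<phi> j c = v ! j}" for v :: "nat list" and j
  define a' where "a' k v = (\<Sum>u\<in>box d (\<lambda>j. if j \<in> S k then R v j else {0}). a k u)" for k v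
  define b' where "b' k v = (\<Sum>u\<in>box d (\<lambda>j. if j \<in> S k then {0} else R v j). b k u)" for k v
  show ?thesis
    unfolding prank_le_def
  proof (rule exI[of _ S], rule exI[of _ a'], rule exI[of _ b'], intro conjI allI impI)
    fix k assume k: "k < r"
    show "S k \<noteq> {}" and "S k \<subset> {..<d}"
      using S[OF k] by auto
    show "depends_only d (S k) (a' k)"
      unfolding depends_only_def a'_def R_def by (auto intro!: arg_cong[where f = "sum _"] box_cong)
    show "depends_only d ({..<d} - S k) (b' k)"
      unfolding depends_only_def b'_def R_def by (auto intro!: arg_cong[where f = "sum _"] box_cong)
  next
    fix v
    have "push_avoiding d m \<phi> A T v = (\<Sum>u\<in>box d (R v). T u)"
      unfolding push_avoiding_def sum.inter_filter[OF finite_fibre, symmetric]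
      by (intro sum.cong) (auto simp: fibre_def box_def R_def)
    also have "\<dots> = (\<Sum>u\<in>box d (R v). \<Sum>k<r. a k u * b k u)"
      by (intro sum.cong refl T) (auto simp: box_def R_def valid_idx_def)
    also have "\<dots> = (\<Sum>k<r. a' k v * b' k v)"
      unfolding a'_def b'_def using S
      by (subst sum.swap) (intro sum.cong refl sum_box_split; blast)
    finally show "push_avoiding d m \<phi> A T v = (\<Sum>k<r. a' k v * b' k v)" .
  qed
qed

section \<open>Inclusion--exclusion over the lifts of a monomial\<close>

lemma sum_Pow_minus_one_power_card:
  assumes "finite S"
  shows "(\<Sum>B\<in>Pow S. (-1::'a::comm_ring_1) ^ card B) = of_bool (S = {})"
proof -
  have "(\<Prod>x\<in>S. (1::'a) - 1) = (\<Sum>B\<in>Pow S. (-1) ^ card B * (\<Prod>x\<in>B. 1) * (\<Prod>x\<in>S - B. 1))"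
    by (rule prod_diff_conv_sum[OF assms])
  then have "(\<Sum>B\<in>Pow S. (-1::'a) ^ card B) = 0 ^ card S"
    by simp
  with assms show ?thesis
    by (cases "S = {}") (simp_all add: card_eq_0_iff power_0_left)
qed

lemma prod_of_bool: "finite A \<Longrightarrow> (\<Prod>a\<in>A. of_bool (P a) :: 'a::comm_semiring_1) = of_bool (\<forall>a\<in>A. P a)"
  by (induction A rule: finite_induct) auto

lemma prod_if_else_zero:
  "finite A \<Longrightarrow> (\<Prod>a\<in>A. if P a then f a else 0 :: 'a::comm_semiring_1)
    = of_bool (\<forall>a\<in>A. P a) * (\<Prod>a\<in>A. f a)"
  by (induction A rule: finite_induct) auto

lemma sum_PiE_Pow_alternating:
  fixes I :: "'j \<Rightarrow> 'u set"
  assumes "finite J" and "finite U" and "\<And>j. j \<in> J \<Longrightarrow> I j \<subseteq> U"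
  shows "(\<Sum>A\<in>PiE J (\<lambda>_. Pow U). (-1::'a::comm_ring_1) ^ (\<Sum>j\<in>J. card (A j)) * of_bool (\<forall>j\<in>J. A j \<inter> I j = {}))
    = of_bool (\<forall>j\<in>J. I j = U)"
proof -
  have "(\<Sum>A\<in>PiE J (\<lambda>_. Pow U). (-1::'a) ^ (\<Sum>j\<in>J. card (A j)) * of_bool (\<forall>j\<in>J. A j \<inter> I j = {}))
      = (\<Sum>A\<in>PiE J (\<lambda>_. Pow U). \<Prod>j\<in>J. (-1) ^ card (A j) * of_bool (A j \<inter> I j = {}))"
    using assms(1) by (simp add: power_sum prod.distrib prod_of_bool)
  also have "\<dots> = (\<Prod>j\<in>J. \<Sum>B\<in>Pow U. (-1) ^ card B * of_bool (B \<inter> I j = {}))"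
    by (rule prod_sum_PiE[symmetric]) (simp_all add: assms(1,2))
  also have "\<dots> = (\<Prod>j\<in>J. of_bool (I j = U))"
  proof (rule prod.cong[OF refl])
    fix j assume "j \<in> J"
    have "{B \<in> Pow U. B \<inter> I j = {}} = Pow (U - I j)" by auto
    then have "(\<Sum>B\<in>Pow U. (-1::'a) ^ card B * of_bool (B \<inter> I j = {})) = of_bool (U - I j = {})"
      using assms(2) by (simp add: Int_def sum_Pow_minus_one_power_card)
    also have "(U - I j = {}) = (I j = U)" using assms(3)[OF \<open>j \<in> J\<close>] by auto
    finally show "(\<Sum>B\<in>Pow U. (-1::'a) ^ card B * of_bool (B \<inter> I j = {})) = of_bool (I j = U)" .
  qed
  also have "\<dots> = of_bool (\<forall>j\<in>J. I j = U)"
    using assms(1) by (rule prod_of_bool)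
  finally show ?thesis .
qed

definition surj_lifts ::
    "nat \<Rightarrow> nat \<Rightarrow> (nat \<Rightarrow> nat \<Rightarrow> nat) \<Rightarrow> (nat list \<Rightarrow>\<^sub>0 nat) \<Rightarrow> (nat list \<times> nat \<Rightarrow> nat list) set" where
  "surj_lifts d m \<phi> \<mu> =
     {h \<in> PiE (occs \<mu>) (\<lambda>e. fibre d m \<phi> (fst e)). \<forall>j<d. (\<lambda>e. h e ! j) ` occs \<mu> = {..<m}}"

lemma finite_surj_lifts [simp]: "finite (surj_lifts d m \<phi> \<mu>)"
  unfolding surj_lifts_def
  by (rule finite_subset[of _ "PiE (occs \<mu>) (\<lambda>e. fibre d m \<phi> (fst e))"]) (auto intro: finite_PiE)

lemma alternating_sum_monom_eval_push_avoiding: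
  "(\<Sum>A\<in>PiE {..<d} (\<lambda>_. Pow {..<m}). (-1) ^ (\<Sum>j<d. card (A j)) * monom_eval \<mu> (push_avoiding d m \<phi> A T))
     = (\<Sum>h\<in>surj_lifts d m \<phi> \<mu>. \<Prod>e\<in>occs \<mu>. T (h e))"
proof -
  let ?H = "PiE (occs \<mu>) (\<lambda>e. fibre d m \<phi> (fst e))"
  let ?As = "PiE {..<d} (\<lambda>_. Pow {..<m})"
  let ?I = "\<lambda>h j. (\<lambda>e. h e ! j) ` occs \<mu>"
  have expand: "monom_eval \<mu> (push_avoiding d m \<phi> A T)
      = (\<Sum>h\<in>?H. of_bool (\<forall>j\<in>{..<d}. A j \<inter> ?I h j = {}) * (\<Prod>e\<in>occs \<mu>. T (h e)))" for A
  proof -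
    have "monom_eval \<mu> (push_avoiding d m \<phi> A T)
        = (\<Prod>e\<in>occs \<mu>. \<Sum>u\<in>fibre d m \<phi> (fst e). if \<forall>j<d. u ! j \<notin> A j then T u else 0)"
      unfolding monom_eval_occs push_avoiding_def ..
    also have "\<dots> = (\<Sum>h\<in>?H. \<Prod>e\<in>occs \<mu>. if \<forall>j<d. h e ! j \<notin> A j then T (h e) else 0)"
      by (rule prod_sum_PiE) simp_all
    also have "\<dots> = (\<Sum>h\<in>?H. of_bool (\<forall>j\<in>{..<d}. A j \<inter> ?I h j = {}) * (\<Prod>e\<in>occs \<mu>. T (h e)))"
      by (intro sum.cong refl) (auto simp: prod_if_else_zero)
    finally show ?thesis .
  qed
  have cover: "?I h j \<subseteq> {..<m}" if "h \<in> ?H" and "j \<in> {..<d}" for h j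
    using that by (auto simp: PiE_iff fibre_def box_def)
  have "(\<Sum>A\<in>?As. (-1) ^ (\<Sum>j<d. card (A j)) * monom_eval \<mu> (push_avoiding d m \<phi> A T))
      = (\<Sum>h\<in>?H. (\<Prod>e\<in>occs \<mu>. T (h e)) *
           (\<Sum>A\<in>?As. (-1) ^ (\<Sum>j<d. card (A j)) * of_bool (\<forall>j\<in>{..<d}. A j \<inter> ?I h j = {})))"
    unfolding expand sum_distrib_left by (subst sum.swap) (simp add: sum_distrib_left ac_simps)
  also have "\<dots> = (\<Sum>h\<in>?H. (\<Prod>e\<in>occs \<mu>. T (h e)) * of_bool (\<forall>j\<in>{..<d}. ?I h j = {..<m}))"
  proof (intro sum.cong refl)
    fix h assume "h \<in> ?H"
    have "(\<Sum>A\<in>?As. (-1) ^ (\<Sum>j<d. card (A j)) * of_bool (\<forall>j\<in>{..<d}. A j \<inter> ?I h j = {}))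
        = (of_bool (\<forall>j\<in>{..<d}. ?I h j = {..<m}) :: complex)"
      by (rule sum_PiE_Pow_alternating) (simp_all add: cover[OF \<open>h \<in> ?H\<close>])
    then show "(\<Prod>e\<in>occs \<mu>. T (h e)) *
        (\<Sum>A\<in>?As. (-1) ^ (\<Sum>j<d. card (A j)) * of_bool (\<forall>j\<in>{..<d}. A j \<inter> ?I h j = {}))
      = (\<Prod>e\<in>occs \<mu>. T (h e)) * of_bool (\<forall>j\<in>{..<d}. ?I h j = {..<m})"
      by (simp only:)
  qed
  also have "\<dots> = (\<Sum>h\<in>surj_lifts d m \<phi> \<mu>. \<Prod>e\<in>occs \<mu>. T (h e))"
  proof -
    have "?H \<inter> {h. \<forall>j\<in>{..<d}. ?I h j = {..<m}} = surj_lifts d m \<phi> \<mu>"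
      unfolding surj_lifts_def by blast
    then show ?thesis by (simp only: sum_mult_of_bool_eq[OF finite_PiE[OF finite_occs finite_fibre]])
  qed
  finally show ?thesis .
qed

lemma surj_lift_valid_idx:
  "h \<in> surj_lifts d m \<phi> \<mu> \<Longrightarrow> e \<in> occs \<mu> \<Longrightarrow> valid_idx d (\<lambda>_. m) (h e)"
  unfolding surj_lifts_def fibre_def box_def valid_idx_def by (auto simp: PiE_iff)

lemma surj_lift_coord_inj:
  assumes "mon_degree \<mu> \<le> m" and h: "h \<in> surj_lifts d m \<phi> \<mu>" and "j < d"
  shows "inj_on (\<lambda>e. h e ! j) (occs \<mu>)"
proof (rule eq_card_imp_inj_on[OF finite_occs])
  have "(\<lambda>e. h e ! j) ` occs \<mu> = {..<m}"
    using h \<open>j < d\<close> unfolding surj_lifts_def by blast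
  moreover have "card ((\<lambda>e. h e ! j) ` occs \<mu>) \<le> card (occs \<mu>)"
    by (rule card_image_le[OF finite_occs])
  ultimately show "card ((\<lambda>e. h e ! j) ` occs \<mu>) = card (occs \<mu>)"
    using assms(1) by (simp add: card_occs)
qed

lemma surj_lift_inj:
  assumes "0 < d" and "mon_degree \<mu> \<le> m" and "h \<in> surj_lifts d m \<phi> \<mu>"
  shows "inj_on h (occs \<mu>)"
  using surj_lift_coord_inj[OF assms(2,3,1)] unfolding inj_on_def by auto

lemma card_surj_lift_coord_eq_1:
  assumes "mon_degree \<mu> \<le> m" and h: "h \<in> surj_lifts d m \<phi> \<mu>" and "k < d" and "a < m"
  shows "card {v \<in> h ` occs \<mu>. v ! k = a} = 1"
proof -
  have "a \<in> (\<lambda>e. h e ! k) ` occs \<mu>"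
    using h \<open>k < d\<close> \<open>a < m\<close> unfolding surj_lifts_def by blast
  then obtain e0 where e0: "e0 \<in> occs \<mu>" "h e0 ! k = a" by blast
  have "{v \<in> h ` occs \<mu>. v ! k = a} = {h e0}"
    using surj_lift_coord_inj[OF assms(1-3)] e0 by (auto simp: inj_on_def)
  then show ?thesis by simp
qed

definition lift_poly :: "nat \<Rightarrow> nat \<Rightarrow> (nat \<Rightarrow> nat \<Rightarrow> nat) \<Rightarrow> complex mpoly \<Rightarrow> complex mpoly" where
  "lift_poly d m \<phi> P =
     (\<Sum>\<mu>\<in>Poly_Mapping.keys P. \<Sum>h\<in>surj_lifts d m \<phi> \<mu>.
        Poly_Mapping.single (squarefree_monom (h ` occs \<mu>)) (Poly_Mapping.lookup P \<mu>))"

lemma keys_lift_poly: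
  assumes "\<nu> \<in> Poly_Mapping.keys (lift_poly d m \<phi> P)"
  obtains \<mu> h where "\<mu> \<in> Poly_Mapping.keys P" and "h \<in> surj_lifts d m \<phi> \<mu>"
    and "\<nu> = squarefree_monom (h ` occs \<mu>)"
proof -
  have "\<nu> \<in> (\<Union>\<mu>\<in>Poly_Mapping.keys P. \<Union>h\<in>surj_lifts d m \<phi> \<mu>.
      Poly_Mapping.keys (Poly_Mapping.single (squarefree_monom (h ` occs \<mu>)) (Poly_Mapping.lookup P \<mu>)))"
    using assms unfolding lift_poly_def by (blast dest: keys_sum[THEN subsetD])
  then show ?thesis
    using that by (auto split: if_splits)
qed

lemma poly_vars_lift_poly: "poly_vars (lift_poly d m \<phi> P) \<subseteq> {i. valid_idx d (\<lambda>_. m) i}"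
proof
  fix i assume "i \<in> poly_vars (lift_poly d m \<phi> P)"
  then obtain \<nu> where "\<nu> \<in> Poly_Mapping.keys (lift_poly d m \<phi> P)" and "i \<in> Poly_Mapping.keys \<nu>"
    unfolding poly_vars_def by blast
  then obtain \<mu> h e where "h \<in> surj_lifts d m \<phi> \<mu>" and "e \<in> occs \<mu>" and "i = h e"
    by (elim keys_lift_poly) (auto simp: keys_squarefree_monom)
  then show "i \<in> {i. valid_idx d (\<lambda>_. m) i}"
    by (simp add: surj_lift_valid_idx)
qed

lemma has_weight_ones_lift_poly:
  assumes "\<And>\<mu>. \<mu> \<in> Poly_Mapping.keys P \<Longrightarrow> mon_degree \<mu> \<le> m"
  shows "has_weight_ones d m (lift_poly d m \<phi> P)"
  unfolding has_weight_ones_def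
proof (intro ballI allI impI)
  fix \<nu> k a assume \<nu>: "\<nu> \<in> Poly_Mapping.keys (lift_poly d m \<phi> P)" and "k < d" and "a < m"
  from \<nu> obtain \<mu> h where "\<mu> \<in> Poly_Mapping.keys P" and h: "h \<in> surj_lifts d m \<phi> \<mu>"
    and \<nu>: "\<nu> = squarefree_monom (h ` occs \<mu>)"
    by (rule keys_lift_poly)
  then have "card {v \<in> h ` occs \<mu>. v ! k = a} = 1"
    using assms \<open>k < d\<close> \<open>a < m\<close> by (intro card_surj_lift_coord_eq_1)
  then show "(\<Sum>v\<in>{v \<in> Poly_Mapping.keys \<nu>. v ! k = a}. Poly_Mapping.lookup \<nu> v) = 1"
    unfolding \<nu> by (simp add: keys_squarefree_monom lookup_squarefree_monom)
qed

lemma mpoly_eval_lift_poly: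
  assumes "0 < d" and deg: "\<And>\<mu>. \<mu> \<in> Poly_Mapping.keys P \<Longrightarrow> mon_degree \<mu> \<le> m"
  shows "mpoly_eval (lift_poly d m \<phi> P) T =
    (\<Sum>A\<in>PiE {..<d} (\<lambda>_. Pow {..<m}). (-1) ^ (\<Sum>j<d. card (A j)) * mpoly_eval P (push_avoiding d m \<phi> A T))"
proof -
  have "mpoly_eval (lift_poly d m \<phi> P) T
      = (\<Sum>\<mu>\<in>Poly_Mapping.keys P. Poly_Mapping.lookup P \<mu> * (\<Sum>h\<in>surj_lifts d m \<phi> \<mu>. \<Prod>e\<in>occs \<mu>. T (h e)))"
    unfolding lift_poly_def mpoly_eval_sum mpoly_eval_single sum_distrib_left
    using surj_lift_inj[OF \<open>0 < d\<close> deg]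
    by (intro sum.cong refl) (simp add: monom_eval_squarefree_monom prod.reindex)
  also have "\<dots> = (\<Sum>\<mu>\<in>Poly_Mapping.keys P. Poly_Mapping.lookup P \<mu> *
      (\<Sum>A\<in>PiE {..<d} (\<lambda>_. Pow {..<m}). (-1) ^ (\<Sum>j<d. card (A j)) * monom_eval \<mu> (push_avoiding d m \<phi> A T)))"
    by (simp only: alternating_sum_monom_eval_push_avoiding)
  also have "\<dots> = (\<Sum>A\<in>PiE {..<d} (\<lambda>_. Pow {..<m}). (-1) ^ (\<Sum>j<d. card (A j)) * mpoly_eval P (push_avoiding d m \<phi> A T))"
    unfolding mpoly_eval_eq_sum_superset[OF finite_keys order_refl] sum_distrib_left
    by (subst sum.swap) (simp add: ac_simps)
  finally show ?thesis .
qed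

definition idx_image :: "nat \<Rightarrow> (nat \<Rightarrow> nat \<Rightarrow> nat) \<Rightarrow> nat list \<Rightarrow> nat list" where
  "idx_image d \<phi> u = map (\<lambda>j. \<phi> j (u ! j)) [0..<d]"

lemma idx_image_surj_lift:
  assumes "h \<in> surj_lifts d m \<phi> \<mu>" and "e \<in> occs \<mu>" and "length (fst e) = d"
  shows "idx_image d \<phi> (h e) = fst e"
proof -
  have "h e \<in> fibre d m \<phi> (fst e)"
    using assms(1,2) unfolding surj_lifts_def by auto
  then show ?thesis
    using assms(3) unfolding idx_image_def fibre_def box_def by (auto intro!: nth_equalityI)
qed

lemma lookup_eq_card_surj_lift:
  assumes "0 < d" and "mon_degree \<mu> \<le> m" and h: "h \<in> surj_lifts d m \<phi> \<mu>"
    and len: "\<And>v. v \<in> Poly_Mapping.keys \<mu> \<Longrightarrow> length v = d"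
  shows "Poly_Mapping.lookup \<mu> v = card {u \<in> h ` occs \<mu>. idx_image d \<phi> u = v}"
proof -
  have "Poly_Mapping.lookup \<mu> v = card {e \<in> occs \<mu>. fst e = v}"
    by (rule lookup_eq_card_occs)
  also have "{e \<in> occs \<mu>. fst e = v} = {e \<in> occs \<mu>. idx_image d \<phi> (h e) = v}"
    using idx_image_surj_lift[OF h] len by (auto simp: occs_def)
  also have "card \<dots> = card (h ` {e \<in> occs \<mu>. idx_image d \<phi> (h e) = v})"
    by (rule card_image[symmetric], rule inj_on_subset[OF surj_lift_inj[OF assms(1-3)]]) auto
  also have "h ` {e \<in> occs \<mu>. idx_image d \<phi> (h e) = v} = {u \<in> h ` occs \<mu>. idx_image d \<phi> u = v}"
    by auto
  finally show ?thesis .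
qed

lemma surj_lift_image_determines_monomial:
  assumes "0 < d"
    and "mon_degree \<mu> \<le> m" and "h \<in> surj_lifts d m \<phi> \<mu>" and "\<And>v. v \<in> Poly_Mapping.keys \<mu> \<Longrightarrow> length v = d"
    and "mon_degree \<mu>' \<le> m" and "h' \<in> surj_lifts d m \<phi> \<mu>'" and "\<And>v. v \<in> Poly_Mapping.keys \<mu>' \<Longrightarrow> length v = d"
    and "h ` occs \<mu> = h' ` occs \<mu>'"
  shows "\<mu> = \<mu>'"
  using lookup_eq_card_surj_lift[OF assms(1-4)] lookup_eq_card_surj_lift[OF assms(1,5-7)] assms(8)
  by (intro poly_mapping_eqI) simp

lemma lift_poly_ne_0:
  assumes "0 < d" and \<mu>0: "\<mu>0 \<in> Poly_Mapping.keys P" and h0: "h0 \<in> surj_lifts d m \<phi> \<mu>0"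
    and deg: "\<And>\<mu>. \<mu> \<in> Poly_Mapping.keys P \<Longrightarrow> mon_degree \<mu> \<le> m"
    and len: "\<And>\<mu> v. \<mu> \<in> Poly_Mapping.keys P \<Longrightarrow> v \<in> Poly_Mapping.keys \<mu> \<Longrightarrow> length v = d"
  shows "lift_poly d m \<phi> P \<noteq> 0"
proof -
  let ?\<nu>0 = "squarefree_monom (h0 ` occs \<mu>0)"
  let ?H0 = "{h \<in> surj_lifts d m \<phi> \<mu>0. h ` occs \<mu>0 = h0 ` occs \<mu>0}"
  text \<open>Lifts remember the monomial they lift, so \<open>?\<nu>0\<close> only arises from \<open>\<mu>0\<close>, and there
    with a positive multiplicity.\<close>
  have monomial_eq_iff: "squarefree_monom (h ` occs \<mu>) = ?\<nu>0 \<longleftrightarrow> \<mu> = \<mu>0 \<and> h \<in> ?H0"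
    if \<mu>: "\<mu> \<in> Poly_Mapping.keys P" and h: "h \<in> surj_lifts d m \<phi> \<mu>" for \<mu> h
  proof -
    have "squarefree_monom (h ` occs \<mu>) = ?\<nu>0 \<longleftrightarrow> h ` occs \<mu> = h0 ` occs \<mu>0"
      by (metis finite_imageI finite_occs keys_squarefree_monom)
    then show ?thesis
      using surj_lift_image_determines_monomial[OF \<open>0 < d\<close> deg[OF \<mu>] h len[OF \<mu>] deg[OF \<mu>0] h0 len[OF \<mu>0]] h
      by auto
  qed
  have "Poly_Mapping.lookup (lift_poly d m \<phi> P) ?\<nu>0
      = (\<Sum>\<mu>\<in>Poly_Mapping.keys P. \<Sum>h\<in>surj_lifts d m \<phi> \<mu>.
           Poly_Mapping.lookup P \<mu> * of_bool (\<mu> = \<mu>0 \<and> h \<in> ?H0))"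
    unfolding lift_poly_def lookup_sum lookup_single by (intro sum.cong refl) (simp add: monomial_eq_iff when_def)
  also have "\<dots> = (\<Sum>\<mu>\<in>Poly_Mapping.keys P. if \<mu> = \<mu>0 then of_nat (card ?H0) * Poly_Mapping.lookup P \<mu>0 else 0)"
    by (intro sum.cong refl) (auto simp: Int_absorb1)
  also have "\<dots> = of_nat (card ?H0) * Poly_Mapping.lookup P \<mu>0"
    using \<mu>0 by simp
  finally have "Poly_Mapping.lookup (lift_poly d m \<phi> P) ?\<nu>0 = of_nat (card ?H0) * Poly_Mapping.lookup P \<mu>0" .
  moreover have "card ?H0 \<noteq> 0"
    using h0 by (simp add: card_eq_0_iff) blast
  moreover have "Poly_Mapping.lookup P \<mu>0 \<noteq> 0"
    using \<mu>0 by (simp add: in_keys_iff)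
  ultimately have "Poly_Mapping.lookup (lift_poly d m \<phi> P) ?\<nu>0 \<noteq> 0"
    by simp
  then show ?thesis
    by auto
qed

text \<open>Number the occurrences of \<open>\<mu>\<close> by \<open>\<beta>\<close> and lift each occurrence \<open>e\<close> to the diagonal index
  \<open>(\<beta> e, \<dots>, \<beta> e)\<close>; \<open>\<phi> j c\<close> is the \<open>j\<close>-th index of the occurrence numbered \<open>c\<close>.\<close>

lemma exists_surj_lift:
  assumes "card (occs \<mu>) = m"
  obtains \<phi> h where "h \<in> surj_lifts d m \<phi> \<mu>"
proof -
  obtain \<beta> where \<beta>: "bij_betw \<beta> (occs \<mu>) {..<m}"
    using ex_bij_betw_finite_nat[OF finite_occs] assms by (auto simp: atLeast0LessThan)
  define \<phi> where "\<phi> j c = fst (inv_into (occs \<mu>) \<beta> c) ! j" for j c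
  define h where "h = (\<lambda>e\<in>occs \<mu>. replicate d (\<beta> e))"
  have "h \<in> surj_lifts d m \<phi> \<mu>"
    unfolding surj_lifts_def
  proof (intro CollectI conjI allI impI)
    have "\<phi> j (\<beta> e) = fst e ! j" if "e \<in> occs \<mu>" for j e
      unfolding \<phi>_def using bij_betw_inv_into_left[OF \<beta> that] by simp
    then show "h \<in> PiE (occs \<mu>) (\<lambda>e. fibre d m \<phi> (fst e))"
      using bij_betwE[OF \<beta>] unfolding h_def fibre_def box_def by auto
    fix j assume "j < d"
    then have "(\<lambda>e. h e ! j) ` occs \<mu> = \<beta> ` occs \<mu>"
      unfolding h_def by (intro image_cong) auto
    then show "(\<lambda>e. h e ! j) ` occs \<mu> = {..<m}"
      using bij_betw_imp_surj_on[OF \<beta>] by simp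
  qed
  then show ?thesis by (rule that)
qed

lemma exists_weight_ones_poly_vanishing_on_prank_le:
  fixes P :: "complex mpoly"
  assumes "0 < d" and "P \<noteq> 0" and vars: "poly_vars P \<subseteq> {i. valid_idx d n i}" and "mpoly_degree P = m"
    and vanishing: "\<And>T. prank_le d n r T \<Longrightarrow> mpoly_eval P T = 0"
  obtains Q :: "complex mpoly" where "Q \<noteq> 0" and "poly_vars Q \<subseteq> {i. valid_idx d (\<lambda>_. m) i}"
    and "has_weight_ones d m Q" and "\<And>T. prank_le d (\<lambda>_. m) r T \<Longrightarrow> mpoly_eval Q T = 0"
proof -
  have m: "m = Max (mon_degree ` Poly_Mapping.keys P)"
    using assms(2,4) by (simp add: mpoly_degree_def)
  have deg: "mon_degree \<mu> \<le> m" if "\<mu> \<in> Poly_Mapping.keys P" for \<mu>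
    using that m by simp
  have "m \<in> mon_degree ` Poly_Mapping.keys P"
    unfolding m using \<open>P \<noteq> 0\<close> by (intro Max_in) auto
  then obtain \<mu>0 where \<mu>0: "\<mu>0 \<in> Poly_Mapping.keys P" and "mon_degree \<mu>0 = m"
    by auto
  then obtain \<phi> h0 where h0: "h0 \<in> surj_lifts d m \<phi> \<mu>0"
    by (metis card_occs exists_surj_lift)
  have len: "length v = d" if "\<mu> \<in> Poly_Mapping.keys P" and "v \<in> Poly_Mapping.keys \<mu>" for \<mu> v
    using that vars by (auto simp: poly_vars_def valid_idx_def)
  show ?thesis
  proof (rule that)
    show "lift_poly d m \<phi> P \<noteq> 0"
      by (rule lift_poly_ne_0[OF \<open>0 < d\<close> \<mu>0 h0 deg len])
    show "poly_vars (lift_poly d m \<phi> P) \<subseteq> {i. valid_idx d (\<lambda>_. m) i}"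
      by (rule poly_vars_lift_poly)
    show "has_weight_ones d m (lift_poly d m \<phi> P)"
      by (rule has_weight_ones_lift_poly[OF deg])
    show "mpoly_eval (lift_poly d m \<phi> P) T = 0" if "prank_le d (\<lambda>_. m) r T" for T
      using that by (simp add: mpoly_eval_lift_poly[OF \<open>0 < d\<close> deg] vanishing prank_le_push_avoiding)
  qed
qed

theorem mainTheorem4:
  fixes d r m :: nat
  assumes "d \<ge> 2" and "r \<ge> 1" and "m \<ge> 1"
    and "\<exists>n :: nat \<Rightarrow> nat. (\<forall>j<d. n j > 0) \<and>
           (\<exists>P :: complex mpoly. P \<noteq> 0 \<and> poly_vars P \<subseteq> {i. valid_idx d n i} \<and>
              mpoly_degree P = m \<and> (\<forall>T. prank_le d n r T \<longrightarrow> mpoly_eval P T = 0))"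
  shows "\<exists>f :: int mpoly. f \<noteq> 0 \<and> poly_vars f \<subseteq> {i. valid_idx d (\<lambda>_. m) i} \<and>
           Gcd (Poly_Mapping.lookup f ` Poly_Mapping.keys f) = 1 \<and> has_weight_ones d m f \<and>
           (\<forall>T. prank_le d (\<lambda>_. m) r T \<longrightarrow> mpoly_eval (Poly_Mapping.map of_int f :: complex mpoly) T = 0)"
proof -
  obtain n and P :: "complex mpoly" where "P \<noteq> 0" and "poly_vars P \<subseteq> {i. valid_idx d n i}"
    and "mpoly_degree P = m" and "\<And>T. prank_le d n r T \<Longrightarrow> mpoly_eval P T = 0"
    using assms(4) by blast
  moreover have "0 < d" using \<open>d \<ge> 2\<close> by simp
  ultimately obtain Q where "Q \<noteq> 0" and Q_vars: "poly_vars Q \<subseteq> {i. valid_idx d (\<lambda>_. m) i}"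
    and Q_weight: "has_weight_ones d m Q" and "\<And>T. prank_le d (\<lambda>_. m) r T \<Longrightarrow> mpoly_eval Q T = 0"
    by (metis exists_weight_ones_poly_vanishing_on_prank_le)
  moreover have "\<forall>j<d. 0 < m" using \<open>m \<ge> 1\<close> by simp
  ultimately obtain f :: "int mpoly" where "f \<noteq> 0" and keys_f: "Poly_Mapping.keys f \<subseteq> Poly_Mapping.keys Q"
    and "Gcd (Poly_Mapping.lookup f ` Poly_Mapping.keys f) = 1"
    and "\<And>T. prank_le d (\<lambda>_. m) r T \<Longrightarrow> mpoly_eval (Poly_Mapping.map of_int f :: complex mpoly) T = 0"
    by (metis exists_primitive_int_poly_vanishing_on_prank_le)
  moreover have "poly_vars f \<subseteq> {i. valid_idx d (\<lambda>_. m) i}"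
    using poly_vars_mono[OF keys_f] Q_vars by blast
  moreover have "has_weight_ones d m f"
    using has_weight_ones_mono[OF keys_f Q_weight] .
  ultimately show ?thesis by blast
qed

end
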